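(* Let $(x_i,r_i)_{i\in\mathcal{I}}$ be a homogeneous ubiquitous system in a nonempty open set $U\subseteq\mathbb{R}^d$. Then for every real $c>0$, the family $(x_i,c\,r_i)_{i\in\mathcal{I}}$ is also a homogeneous ubiquitous system in $U$.
   Context: Fix a norm $|\cdot|$ on $\mathbb{R}^d$; $\mathcal{L}^d$ is Lebesgue measure. Let $\mathcal{I}$ be a countably infinite index set. A family $(x_i,r_i)_{i\in\mathcal{I}}$ in $\mathbb{R}^d\times(0,\infty)$ is an approximation system if $\sup_i r_i<\infty$ and for every $m\in\mathbb{N}$ the set $\{i\in\mathcal{I}: |x_i|<m,\ r_i>1/m\}$ is finite. It is a homogeneous ubiquitous system in a nonempty open set $U$ if it is an approximation system and for $\mathcal{L}^d$-almost every $x\in U$ there are infinitely many $i\in\mathcal{I}$ with $|x-x_i|<r_i$. *)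

theory Defs
  imports "HOL-Analysis.Analysis"
begin

definition is_norm :: "('a::euclidean_space \<Rightarrow> real) \<Rightarrow> bool" where
  "is_norm N \<longleftrightarrow> (\<forall>x. N x \<ge> 0) \<and> (\<forall>x. N x = 0 \<longleftrightarrow> x = 0)
     \<and> (\<forall>c x. N (c *\<^sub>R x) = \<bar>c\<bar> * N x) \<and> (\<forall>x y. N (x + y) \<le> N x + N y)"

definition approximation_system ::
  "('a::euclidean_space \<Rightarrow> real) \<Rightarrow> 'i set \<Rightarrow> ('i \<Rightarrow> 'a) \<Rightarrow> ('i \<Rightarrow> real) \<Rightarrow> bool" where
  "approximation_system N I x r \<longleftrightarrow>
     (\<forall>i\<in>I. r i > 0) \<and> bdd_above (r ` I) \<and>
     (\<forall>m::nat. finite {i\<in>I. N (x i) < real m \<and> r i > 1 / real m})"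

definition homogeneous_ubiquitous_system ::
  "('a::euclidean_space \<Rightarrow> real) \<Rightarrow> 'i set \<Rightarrow> ('i \<Rightarrow> 'a) \<Rightarrow> ('i \<Rightarrow> real) \<Rightarrow> 'a set \<Rightarrow> bool" where
  "homogeneous_ubiquitous_system N I x r U \<longleftrightarrow>
     approximation_system N I x r \<and>
     (AE y in lebesgue. y \<in> U \<longrightarrow> infinite {i\<in>I. N (y - x i) < r i})"

end

theory Submission
  imports Defs
begin

text \<open>Fix a finite set F of indices and let A be the set of points of U lying in no
scaled ball B(x_i, c r_i) with i outside F. A point y of A that is approximated infinitely often lies in balls B(x_i, r_i) with
arbitrarily small r_i; the ball around y of radius comparable to r_i then contains the
scaled ball B(x_i, c r_i), which misses A, so A has density at most some t < 1 at y,
uniformly in y. By the Vitali covering theorem such a set is negligible, and the points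
of U approximated only finitely often by the scaled system lie in the countable union of
the sets A over all finite F.\<close>

section \<open>Arbitrary norms on Euclidean space\<close>

lemma is_norm_nonneg: "is_norm N \<Longrightarrow> 0 \<le> N v"
  unfolding is_norm_def by blast

lemma is_norm_zero: "is_norm N \<Longrightarrow> N 0 = 0"
  unfolding is_norm_def by blast

lemma is_norm_scaleR: "is_norm N \<Longrightarrow> N (t *\<^sub>R v) = \<bar>t\<bar> * N v"
  unfolding is_norm_def by blast

lemma is_norm_triangle: "is_norm N \<Longrightarrow> N (u + v) \<le> N u + N v"
  unfolding is_norm_def by blast

lemma is_norm_minus_commute:
  assumes "is_norm N"
  shows "N (u - v) = N (v - u)"
  using is_norm_scaleR[OF assms, of "-1" "v - u"] by simp

lemma is_norm_sum_le:
  assumes "is_norm N" "finite A"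
  shows "N (sum f A) \<le> (\<Sum>i\<in>A. N (f i))"
  using assms(2)
proof (induction A rule: finite_induct)
  case empty
  show ?case by (simp add: is_norm_zero[OF assms(1)])
next
  case (insert a A)
  then show ?case using is_norm_triangle[OF assms(1), of "f a" "sum f A"] by simp
qed

lemma is_norm_le_norm:
  assumes "is_norm N"
  obtains b where "b > 0" "\<And>v. N v \<le> b * norm v"
proof
  define b where "b = (\<Sum>i\<in>Basis. N i) + 1"
  show "b > 0"
    unfolding b_def using is_norm_nonneg[OF assms] by (smt (verit) sum_nonneg)
  fix v :: 'a
  have "N v = N (\<Sum>i\<in>Basis. (v \<bullet> i) *\<^sub>R i)"
    by (simp add: euclidean_representation)
  also have "\<dots> \<le> (\<Sum>i\<in>Basis. N ((v \<bullet> i) *\<^sub>R i))"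
    by (rule is_norm_sum_le[OF assms]) simp
  also have "\<dots> = (\<Sum>i\<in>Basis. \<bar>v \<bullet> i\<bar> * N i)"
    by (simp add: is_norm_scaleR[OF assms])
  also have "\<dots> \<le> (\<Sum>i\<in>Basis. norm v * N i)"
    by (intro sum_mono mult_right_mono Basis_le_norm is_norm_nonneg[OF assms])
  also have "\<dots> \<le> b * norm v"
    unfolding b_def by (simp add: sum_distrib_left algebra_simps)
  finally show "N v \<le> b * norm v" .
qed

lemma continuous_on_is_norm:
  assumes "is_norm N"
  shows "continuous_on S N"
proof -
  obtain b where b: "b > 0" "\<And>v. N v \<le> b * norm v"
    using is_norm_le_norm[OF assms] by blast
  have "dist (N u) (N v) \<le> b * dist u v" for u v
    using is_norm_triangle[OF assms, of v "u - v"] is_norm_triangle[OF assms, of u "v - u"]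
      b(2)[of "u - v"] b(2)[of "v - u"]
    by (simp add: dist_real_def dist_norm norm_minus_commute abs_le_iff)
  then have "b-lipschitz_on S N"
    using b(1) by (intro lipschitz_onI) auto
  then show ?thesis
    by (rule lipschitz_on_continuous_on)
qed

lemma is_norm_ge_norm:
  assumes "is_norm N"
  obtains a where "a > 0" "\<And>v::'a::euclidean_space. a * norm v \<le> N v"
proof -
  obtain u :: 'a where u: "norm u = 1" "\<And>v. norm v = 1 \<Longrightarrow> N u \<le> N v"
    using continuous_attains_inf[of "sphere 0 1" N] continuous_on_is_norm[OF assms] by auto
  have "N u > 0"
    using assms u(1) unfolding is_norm_def by (metis less_eq_real_def norm_zero zero_neq_one)
  moreover have "N u * norm v \<le> N v" for v
  proof (cases "v = 0")
    case True
    then show ?thesis by (simp add: is_norm_nonneg[OF assms])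
  next
    case False
    have "N u \<le> N ((1 / norm v) *\<^sub>R v)"
      using False by (intro u(2)) simp
    also have "\<dots> = N v / norm v"
      by (simp add: is_norm_scaleR[OF assms])
    finally show ?thesis
      using False by (simp add: field_simps)
  qed
  ultimately show thesis
    using that by blast
qed

lemma open_is_norm_ball:
  assumes "is_norm N"
  shows "open {y. N (y - p) < t}"
  by (intro open_Collect_less continuous_on_compose2[OF continuous_on_is_norm[OF assms]])
    (auto intro!: continuous_intros)

section \<open>Sets whose density stays below one are negligible\<close>

lemma emeasure_le_disjoint_family_cover:
  fixes t :: ennreal
  assumes S: "S \<in> sets M" and C: "countable C" and disj: "disjoint_family_on B C"
    and B: "\<And>i. i \<in> C \<Longrightarrow> B i \<in> sets M"
    and density: "\<And>i. i \<in> C \<Longrightarrow> emeasure M (S \<inter> B i) \<le> t * emeasure M (B i)"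
    and null: "S - (\<Union>i\<in>C. B i) \<in> null_sets M"
  shows "emeasure M S \<le> t * emeasure M (\<Union>i\<in>C. B i)"
proof -
  have SB: "(\<Union>i\<in>C. S \<inter> B i) \<in> sets M"
    using S B C by (intro sets.countable_UN'') auto
  have "emeasure M S = emeasure M ((\<Union>i\<in>C. S \<inter> B i) \<union> (S - (\<Union>i\<in>C. B i)))"
    by (rule arg_cong[where f = "emeasure M"]) blast
  also have "\<dots> = emeasure M (\<Union>i\<in>C. S \<inter> B i)"
    by (rule emeasure_Un_null_set[OF SB null])
  also have "\<dots> = (\<integral>\<^sup>+i. emeasure M (S \<inter> B i) \<partial>count_space C)"
    using S B disj by (intro emeasure_UN_countable[OF _ C]) (auto simp: disjoint_family_on_def)
  also have "\<dots> \<le> (\<integral>\<^sup>+i. t * emeasure M (B i) \<partial>count_space C)"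
    using density by (intro nn_integral_mono) auto
  also have "\<dots> = t * (\<integral>\<^sup>+i. emeasure M (B i) \<partial>count_space C)"
    by (rule nn_integral_cmult) simp
  also have "\<dots> = t * emeasure M (\<Union>i\<in>C. B i)"
    using B disj by (simp add: emeasure_UN_countable[OF _ C])
  finally show ?thesis .
qed

lemma emeasure_le_density_times_open_superset:
  fixes S :: "'a::euclidean_space set"
  assumes S: "S \<in> sets lebesgue" and "open G" "S \<subseteq> G" "0 \<le> t"
    and density: "\<And>x d. x \<in> S \<Longrightarrow> 0 < d \<Longrightarrow> \<exists>D. 0 < D \<and> D < d \<and>
        measure lebesgue (S \<inter> ball x D) \<le> t * measure lebesgue (ball x D)"
  shows "emeasure lebesgue S \<le> ennreal t * emeasure lebesgue G"
proof -
  define K where "K = {(x, D). x \<in> S \<and> 0 < D \<and> ball x D \<subseteq> G \<and>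
      measure lebesgue (S \<inter> ball x D) \<le> t * measure lebesgue (ball x D)}"
  have "\<exists>k. k \<in> K \<and> x \<in> ball (fst k) (snd k) \<and> snd k < d" if "x \<in> S" "0 < d" for x d
  proof -
    obtain e where "e > 0" "ball x e \<subseteq> G"
      using assms(2,3) \<open>x \<in> S\<close> open_contains_ball by blast
    moreover obtain D where "0 < D" "D < min d e"
        "measure lebesgue (S \<inter> ball x D) \<le> t * measure lebesgue (ball x D)"
      using density[OF \<open>x \<in> S\<close>, of "min d e"] \<open>0 < d\<close> \<open>e > 0\<close> by auto
    ultimately show ?thesis
      using \<open>x \<in> S\<close> by (intro exI[of _ "(x, D)"]) (auto simp: K_def)
  qed
  then obtain C where C: "countable C" "C \<subseteq> K"
      "pairwise (\<lambda>k l. disjnt (ball (fst k) (snd k)) (ball (fst l) (snd l))) C"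
      "negligible (S - (\<Union>k\<in>C. ball (fst k) (snd k)))"
    using Vitali_covering_theorem_balls[of S K fst snd] by blast
  have "emeasure lebesgue S \<le> ennreal t * emeasure lebesgue (\<Union>k\<in>C. ball (fst k) (snd k))"
  proof (rule emeasure_le_disjoint_family_cover[OF S C(1)])
    show "disjoint_family_on (\<lambda>k. ball (fst k) (snd k)) C"
      using C(3) unfolding disjoint_family_on_def pairwise_def disjnt_def by blast
    show "S - (\<Union>k\<in>C. ball (fst k) (snd k)) \<in> null_sets lebesgue"
      using C(4) by (simp add: negligible_iff_null_sets)
    fix k assume "k \<in> C"
    then have "measure lebesgue (S \<inter> ball (fst k) (snd k)) \<le> t * measure lebesgue (ball (fst k) (snd k))"
      using C(2) by (auto simp: K_def)
    then show "emeasure lebesgue (S \<inter> ball (fst k) (snd k)) \<le> ennreal t * emeasure lebesgue (ball (fst k) (snd k))"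
      using fmeasurable_Int_fmeasurable[OF lmeasurable_ball S] \<open>0 \<le> t\<close>
      by (simp add: emeasure_eq_measure2 Int_commute ennreal_mult'[symmetric])
  qed simp
  also have "\<dots> \<le> ennreal t * emeasure lebesgue G"
    using C(2) \<open>open G\<close> by (intro mult_left_mono emeasure_mono) (fastforce simp: K_def)+
  finally show ?thesis .
qed

lemma negligible_if_density_le_fmeasurable:
  fixes S :: "'a::euclidean_space set"
  assumes S: "S \<in> lmeasurable" and t: "0 \<le> t" "t < 1"
    and density: "\<And>x d. x \<in> S \<Longrightarrow> 0 < d \<Longrightarrow> \<exists>D. 0 < D \<and> D < d \<and>
        measure lebesgue (S \<inter> ball x D) \<le> t * measure lebesgue (ball x D)"
  shows "negligible S"
proof (rule ccontr)
  define s where "s = measure lebesgue S"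
  assume "\<not> negligible S"
  then have "s > 0"
    using negligible_iff_measure0[OF S] by (simp add: s_def order_less_le)
  define \<eta> where "\<eta> = (1 - t) * s / 2"
  have "\<eta> > 0"
    using t \<open>s > 0\<close> by (simp add: \<eta>_def)
  obtain G where G: "open G" "S \<subseteq> G" "G - S \<in> lmeasurable" "emeasure lebesgue (G - S) < ennreal \<eta>"
    using sets_lebesgue_outer_open[OF fmeasurableD[OF S] \<open>\<eta> > 0\<close>] by blast
  have "emeasure lebesgue G = emeasure lebesgue S + emeasure lebesgue (G - S)"
    using G(2,3) S by (subst plus_emeasure) (auto simp: Un_absorb1 fmeasurableD)
  also have "\<dots> \<le> ennreal s + ennreal \<eta>"
    using G(4) emeasure_eq_measure2[OF S] by (simp add: s_def)
  finally have G_le: "emeasure lebesgue G \<le> ennreal (s + \<eta>)"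
    using \<open>\<eta> > 0\<close> \<open>s > 0\<close> by simp
  have "ennreal s = emeasure lebesgue S"
    using emeasure_eq_measure2[OF S] by (simp add: s_def)
  also have "\<dots> \<le> ennreal t * emeasure lebesgue G"
    by (rule emeasure_le_density_times_open_superset[OF fmeasurableD[OF S] G(1,2) t(1) density])
  also have "\<dots> \<le> ennreal t * ennreal (s + \<eta>)"
    using G_le by (rule mult_left_mono) simp
  also have "\<dots> = ennreal (t * (s + \<eta>))"
    by (rule ennreal_mult'[OF t(1), symmetric])
  finally have "s \<le> t * (s + \<eta>)"
    using t(1) \<open>\<eta> > 0\<close> \<open>s > 0\<close> by (subst (asm) ennreal_le_iff) simp_all
  moreover have "t * (s + \<eta>) < s"
  proof -
    have "t * \<eta> \<le> \<eta>"
      using t \<open>\<eta> > 0\<close> by (intro mult_left_le_one_le) simp_all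
    moreover have "\<eta> < (1 - t) * s"
      using t \<open>s > 0\<close> by (simp add: \<eta>_def)
    ultimately show ?thesis
      by (simp add: algebra_simps)
  qed
  ultimately show False
    by linarith
qed

lemma negligible_if_density_le:
  fixes S :: "'a::euclidean_space set"
  assumes S: "S \<in> sets lebesgue" and t: "0 \<le> t" "t < 1"
    and density: "\<And>x d. x \<in> S \<Longrightarrow> 0 < d \<Longrightarrow> \<exists>D. 0 < D \<and> D < d \<and>
        measure lebesgue (S \<inter> ball x D) \<le> t * measure lebesgue (ball x D)"
  shows "negligible S"
proof -
  have "negligible (S \<inter> ball 0 (real n))" for n
  proof (rule negligible_if_density_le_fmeasurable[OF _ t])
    show "S \<inter> ball 0 (real n) \<in> lmeasurable"
      using fmeasurable_Int_fmeasurable[OF lmeasurable_ball S] by (simp add: Int_commute)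
    fix x and d :: real
    assume "x \<in> S \<inter> ball 0 (real n)" "0 < d"
    then obtain D where D: "0 < D" "D < d" "measure lebesgue (S \<inter> ball x D) \<le> t * measure lebesgue (ball x D)"
      using density by blast
    have "measure lebesgue (S \<inter> ball 0 (real n) \<inter> ball x D) \<le> measure lebesgue (S \<inter> ball x D)"
    proof (rule measure_mono_fmeasurable)
      show "S \<inter> ball 0 (real n) \<inter> ball x D \<in> sets lebesgue"
        using S by (intro sets.Int) simp_all
      show "S \<inter> ball x D \<in> lmeasurable"
        using fmeasurable_Int_fmeasurable[OF lmeasurable_ball S] by (simp add: Int_commute)
    qed blast
    with D show "\<exists>D. 0 < D \<and> D < d \<and>
        measure lebesgue (S \<inter> ball 0 (real n) \<inter> ball x D) \<le> t * measure lebesgue (ball x D)"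
      by (intro exI[of _ D]) auto
  qed
  then have "negligible (\<Union>n. S \<inter> ball 0 (real n))"
    by (rule negligible_Union_nat)
  moreover have "S \<subseteq> (\<Union>n. S \<inter> ball 0 (real n))"
  proof
    fix x assume "x \<in> S"
    obtain n where "norm x < real n"
      using reals_Archimedean2 by blast
    with \<open>x \<in> S\<close> show "x \<in> (\<Union>n. S \<inter> ball 0 (real n))"
      by auto
  qed
  ultimately show ?thesis
    by (rule negligible_subset)
qed

lemma measure_Int_ball_le_if_disjoint_ball:
  fixes p y :: "'a::euclidean_space"
  assumes S: "S \<in> sets lebesgue" and "0 \<le> s" "0 < D"
    and sub: "ball p s \<subseteq> ball y D" and disj: "S \<inter> ball p s = {}"
  shows "measure lebesgue (S \<inter> ball y D) \<le> (1 - (s / D) ^ DIM('a)) * measure lebesgue (ball y D)"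
proof -
  have "measure lebesgue (S \<inter> ball y D) \<le> measure lebesgue (ball y D - ball p s)"
    using S disj by (intro measure_mono_fmeasurable) (auto simp: fmeasurable_Diff)
  also have "\<dots> = measure lebesgue (ball y D) - measure lebesgue (ball p s)"
    using sub by (intro measurable_measure_Diff) auto
  also have "measure lebesgue (ball p s) = (s / D) ^ DIM('a) * measure lebesgue (ball y D)"
    using content_ball_conv_unit_ball[of s p] content_ball_conv_unit_ball[of D y] assms(2,3)
    by (simp add: power_divide)
  finally show ?thesis
    by (simp add: algebra_simps)
qed

section \<open>Scaling a homogeneous ubiquitous system\<close>

lemma approximation_system_mult:
  assumes approx: "approximation_system N I x r" and "c > 0"
  shows "approximation_system N I x (\<lambda>i. c * r i)"
  unfolding approximation_system_def
proof (intro conjI ballI allI)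
  have pos: "\<And>i. i \<in> I \<Longrightarrow> r i > 0" and "bdd_above (r ` I)"
    and fin: "\<And>m::nat. finite {i\<in>I. N (x i) < real m \<and> r i > 1 / real m}"
    using approx unfolding approximation_system_def by auto
  show "c * r i > 0" if "i \<in> I" for i
    using pos[OF that] \<open>c > 0\<close> by simp
  obtain R where "\<And>i. i \<in> I \<Longrightarrow> r i \<le> R"
    using \<open>bdd_above (r ` I)\<close> unfolding bdd_above_def by auto
  then show "bdd_above ((\<lambda>i. c * r i) ` I)"
    using \<open>c > 0\<close> by (intro bdd_aboveI[of _ "c * R"]) auto
  fix m :: nat
  define k where "k = nat \<lceil>c\<rceil> + 1"
  have "c \<le> real k" "1 \<le> k"
    unfolding k_def by linarith+
  have "{i\<in>I. N (x i) < real m \<and> c * r i > 1 / real m}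
      \<subseteq> {i\<in>I. N (x i) < real (k * m) \<and> r i > 1 / real (k * m)}"
  proof safe
    fix i assume i: "i \<in> I" "N (x i) < real m" "1 / real m < c * r i"
    show "N (x i) < real (k * m)"
      using i(2) \<open>1 \<le> k\<close> by (smt (verit) of_nat_mono mult_le_mono1 mult_1)
    have "r i > 0"
      using pos[OF i(1)] .
    have "1 / real (k * m) = (1 / real m) / real k"
      by simp
    also have "\<dots> < c * r i / real k"
      using i(3) \<open>1 \<le> k\<close> by (intro divide_strict_right_mono) simp_all
    also have "\<dots> \<le> r i"
      using \<open>c \<le> real k\<close> \<open>1 \<le> k\<close> \<open>r i > 0\<close> by (simp add: field_simps)
    finally show "1 / real (k * m) < r i" .
  qed
  then show "finite {i\<in>I. N (x i) < real m \<and> c * r i > 1 / real m}"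
    using fin by (rule finite_subset)
qed

lemma approximation_system_obtain_small_radius:
  assumes approx: "approximation_system N I x r" and "is_norm N"
    and inf: "infinite {i\<in>I. N (y - x i) < r i}" and "finite F" and "\<epsilon> > 0"
  obtains i where "i \<in> I" "i \<notin> F" "N (y - x i) < r i" "r i < \<epsilon>"
proof -
  obtain R where R: "\<And>i. i \<in> I \<Longrightarrow> r i \<le> R"
    using approx unfolding approximation_system_def bdd_above_def by auto
  obtain m :: nat where m: "N y + R < real m" "1 / \<epsilon> < real m"
    using reals_Archimedean2[of "max (N y + R) (1 / \<epsilon>)"] by auto
  let ?big = "{i\<in>I. N (x i) < real m \<and> r i > 1 / real m}"
  have "finite ?big"
    using approx unfolding approximation_system_def by blast
  then have "infinite ({i\<in>I. N (y - x i) < r i} - (F \<union> ?big))"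
    using inf \<open>finite F\<close> by (intro Diff_infinite_finite) auto
  then obtain i where i: "i \<in> I" "i \<notin> F" "N (y - x i) < r i" "i \<notin> ?big"
    using infinite_imp_nonempty by blast
  have "N (x i) \<le> N (x i - y) + N y"
    using is_norm_triangle[OF \<open>is_norm N\<close>, of "x i - y" y] by simp
  then have "N (x i) < real m"
    using i(1,3) R[of i] m(1) is_norm_minus_commute[OF \<open>is_norm N\<close>, of "x i" y] by linarith
  then have "r i \<le> 1 / real m"
    using i(1,4) by auto
  also have "\<dots> < \<epsilon>"
    using m(2) \<open>\<epsilon> > 0\<close> by (simp add: divide_less_eq field_simps)
  finally show thesis
    using that i(1-3) by blast
qed

lemma negligible_finitely_approximated:
  assumes "homogeneous_ubiquitous_system N I x r U"
  shows "negligible {y \<in> U. finite {i\<in>I. N (y - x i) < r i}}"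
proof -
  have "AE y in lebesgue. y \<in> U \<longrightarrow> infinite {i\<in>I. N (y - x i) < r i}"
    using assms unfolding homogeneous_ubiquitous_system_def by blast
  then obtain Z where Z: "{y \<in> space lebesgue. \<not> (y \<in> U \<longrightarrow> infinite {i\<in>I. N (y - x i) < r i})} \<subseteq> Z"
      "emeasure lebesgue Z = 0" "Z \<in> sets lebesgue"
    by (rule AE_E)
  have "negligible Z"
    using null_setsI[OF Z(2,3)] by (simp add: negligible_iff_null_sets)
  moreover have "{y \<in> U. finite {i\<in>I. N (y - x i) < r i}} \<subseteq> Z"
    using Z(1) by auto
  ultimately show ?thesis
    by (rule negligible_subset)
qed

lemma measure_Int_ball_le_if_disjoint_scaled_ball:
  fixes y p :: "'a::euclidean_space"
  assumes a: "a > 0" "\<And>v. a * norm v \<le> N v" and b: "b > 0" "\<And>v. N v \<le> b * norm v"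
    and "c > 0" and S: "S \<in> sets lebesgue" and near: "N (y - p) < \<rho>"
    and disj: "S \<inter> {z. N (z - p) < c * \<rho>} = {}"
  shows "measure lebesgue (S \<inter> ball y ((c / b + 1 / a) * \<rho>))
    \<le> (1 - (c / b / (c / b + 1 / a)) ^ DIM('a)) * measure lebesgue (ball y ((c / b + 1 / a) * \<rho>))"
proof -
  define k where "k = c / b + 1 / a"
  have "k > 0"
    using a(1) b(1) \<open>c > 0\<close> by (simp add: k_def add_pos_pos)
  have "a * dist y p < \<rho>"
    using a(2)[of "y - p"] near by (simp add: dist_norm)
  moreover have "0 \<le> a * dist y p"
    using a(1) by simp
  ultimately have "dist y p < \<rho> / a" "\<rho> > 0"
    using a(1) by (simp add: pos_less_divide_eq mult.commute, linarith)
  then have "ball p (c * \<rho> / b) \<subseteq> ball y (k * \<rho>)"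
    unfolding ball_subset_ball_iff by (simp add: dist_commute k_def algebra_simps)
  moreover have "ball p (c * \<rho> / b) \<subseteq> {z. N (z - p) < c * \<rho>}"
  proof
    fix z assume "z \<in> ball p (c * \<rho> / b)"
    then have "norm (z - p) < c * \<rho> / b"
      by (simp add: dist_norm norm_minus_commute)
    then have "b * norm (z - p) < c * \<rho>"
      using b(1) by (simp add: pos_less_divide_eq mult.commute)
    then show "z \<in> {z. N (z - p) < c * \<rho>}"
      using b(2)[of "z - p"] by simp
  qed
  ultimately have "measure lebesgue (S \<inter> ball y (k * \<rho>))
      \<le> (1 - (c * \<rho> / b / (k * \<rho>)) ^ DIM('a)) * measure lebesgue (ball y (k * \<rho>))"
    using disj S \<open>\<rho> > 0\<close> \<open>k > 0\<close> b(1) \<open>c > 0\<close>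
    by (intro measure_Int_ball_le_if_disjoint_ball) auto
  also have "c * \<rho> / b / (k * \<rho>) = c / b / k"
    using \<open>\<rho> > 0\<close> by simp
  finally show ?thesis
    unfolding k_def .
qed

lemma negligible_outside_scaled_balls:
  assumes N: "is_norm N" and hus: "homogeneous_ubiquitous_system N I x r U"
    and U: "U \<in> sets lebesgue" and "c > 0" and "finite F"
  shows "negligible (U - (\<Union>i\<in>I - F. {y. N (y - x i) < c * r i}))"
    (is "negligible ?A")
proof -
  obtain a where a: "a > 0" "\<And>v. a * norm v \<le> N v"
    using is_norm_ge_norm[OF N] by blast
  obtain b where b: "b > 0" "\<And>v. N v \<le> b * norm v"
    using is_norm_le_norm[OF N] by blast
  have approx: "approximation_system N I x r"
    using hus unfolding homogeneous_ubiquitous_system_def by blast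
  define Z where "Z = {y \<in> U. finite {i\<in>I. N (y - x i) < r i}}"
  have "negligible Z"
    unfolding Z_def using hus by (rule negligible_finitely_approximated)
  have "open (\<Union>i\<in>I - F. {y. N (y - x i) < c * r i})"
    using open_is_norm_ball[OF N] by blast
  then have "?A - Z \<in> sets lebesgue"
    using U negligible_imp_sets[OF \<open>negligible Z\<close>] by (intro sets.Diff) (auto intro: borel_open)
  define k where "k = c / b + 1 / a"
  have "0 < c / b" "c / b < k" "k > 0"
    using a(1) b(1) \<open>c > 0\<close> by (simp_all add: k_def add_pos_pos)
  then have "0 < c / b / k" "c / b / k < 1"
    by (simp_all only: divide_pos_pos divide_less_eq_1_pos)
  have "negligible (?A - Z)"
  proof (rule negligible_if_density_le[OF \<open>?A - Z \<in> sets lebesgue\<close>])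
    show "0 \<le> 1 - (c / b / k) ^ DIM('a)" "1 - (c / b / k) ^ DIM('a) < 1"
      using \<open>0 < c / b / k\<close> \<open>c / b / k < 1\<close> by (simp_all add: power_le_one)
    fix y and d :: real
    assume "y \<in> ?A - Z" and "0 < d"
    then have "infinite {i\<in>I. N (y - x i) < r i}"
      by (simp add: Z_def)
    then obtain i where i: "i \<in> I" "i \<notin> F" "N (y - x i) < r i" "r i < d / k"
      using approximation_system_obtain_small_radius[OF approx N _ \<open>finite F\<close>] \<open>0 < d\<close> \<open>k > 0\<close>
      by (metis divide_pos_pos)
    have "(?A - Z) \<inter> {z. N (z - x i) < c * r i} = {}"
      using i(1,2) by blast
    then have "measure lebesgue ((?A - Z) \<inter> ball y (k * r i))
        \<le> (1 - (c / b / k) ^ DIM('a)) * measure lebesgue (ball y (k * r i))"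
      using measure_Int_ball_le_if_disjoint_scaled_ball[OF a b \<open>c > 0\<close> \<open>?A - Z \<in> sets lebesgue\<close> i(3)]
      by (simp add: k_def)
    moreover have "0 < k * r i" "k * r i < d"
      using approx i(1,4) \<open>k > 0\<close> by (auto simp: approximation_system_def field_simps)
    ultimately show "\<exists>D. 0 < D \<and> D < d \<and> measure lebesgue ((?A - Z) \<inter> ball y D)
        \<le> (1 - (c / b / k) ^ DIM('a)) * measure lebesgue (ball y D)"
      by blast
  qed
  then show ?thesis
    using \<open>negligible Z\<close> by (rule negligible_subset[OF negligible_Un]) blast
qed

lemma AE_infinitely_approximated_scaled:
  assumes N: "is_norm N" and "countable I" and hus: "homogeneous_ubiquitous_system N I x r U"
    and U: "U \<in> sets lebesgue" and "c > 0"
  shows "AE y in lebesgue. y \<in> U \<longrightarrow> infinite {i\<in>I. N (y - x i) < c * r i}"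
proof (rule AE_I')
  let ?A = "\<lambda>F. U - (\<Union>i\<in>I - F. {y. N (y - x i) < c * r i})"
  have "negligible (\<Union>F\<in>{F. finite F \<and> F \<subseteq> I}. ?A F)"
    using negligible_outside_scaled_balls[OF N hus U \<open>c > 0\<close>] \<open>countable I\<close>
    by (intro negligible_countable_Union countable_image countable_Collect_finite_subset) auto
  then show "(\<Union>F\<in>{F. finite F \<and> F \<subseteq> I}. ?A F) \<in> null_sets lebesgue"
    by (simp add: negligible_iff_null_sets)
  show "{y \<in> space lebesgue. \<not> (y \<in> U \<longrightarrow> infinite {i\<in>I. N (y - x i) < c * r i})}
      \<subseteq> (\<Union>F\<in>{F. finite F \<and> F \<subseteq> I}. ?A F)"
  proof
    fix y assume "y \<in> {y \<in> space lebesgue. \<not> (y \<in> U \<longrightarrow> infinite {i\<in>I. N (y - x i) < c * r i})}"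
    then have "y \<in> ?A {i\<in>I. N (y - x i) < c * r i}" "finite {i\<in>I. N (y - x i) < c * r i}"
      by auto
    then show "y \<in> (\<Union>F\<in>{F. finite F \<and> F \<subseteq> I}. ?A F)"
      by blast
  qed
qed

theorem proposition4p5:
  fixes N :: "'a::euclidean_space \<Rightarrow> real"
    and I :: "'i set" and x :: "'i \<Rightarrow> 'a" and r :: "'i \<Rightarrow> real"
    and U :: "'a set" and c :: real
  assumes "is_norm N"
    and "countable I" and "infinite I"
    and "open U" and "U \<noteq> {}"
    and "homogeneous_ubiquitous_system N I x r U"
    and "c > 0"
  shows "homogeneous_ubiquitous_system N I x (\<lambda>i. c * r i) U"
proof -
  have "approximation_system N I x r"
    using assms(6) unfolding homogeneous_ubiquitous_system_def by blast
  then have "approximation_system N I x (\<lambda>i. c * r i)"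
    using \<open>c > 0\<close> by (rule approximation_system_mult)
  moreover have "AE y in lebesgue. y \<in> U \<longrightarrow> infinite {i\<in>I. N (y - x i) < c * r i}"
    using assms(1,2,6,7) \<open>open U\<close> by (intro AE_infinitely_approximated_scaled) auto
  ultimately show ?thesis
    unfolding homogeneous_ubiquitous_system_def by blast
qed

end
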